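(* Let $[a,b]\subset[0,1]$, $c\in(0,1]$, $K=\{u\in\mathcal C([0,1]): u\ge 0,\ \min_{t\in[a,b]}u(t)\ge c\|u\|\}$ with the supremum norm $\|\cdot\|$. Assume: (H1) $f:[0,1]\times[0,\infty)\to[0,\infty)$ is such that $f(\cdot,u(\cdot))$ is measurable whenever $u\in\mathcal C([0,1])$, and for each $r>0$ there is $R>0$ with $f(t,u)\le R$ for a.a. $t\in[0,1]$ and all $u\in[0,r]$; (H2) $g$ is measurable and $g\ge 0$ a.e.; (H3) $k:[0,1]\times[0,1]\to[0,\infty)$ is continuous; (H4) there is a measurable $\Phi:[0,1]\to[0,\infty)$ with $\Phi g\in L^1(0,1)$, $\int_a^b\Phi g>0$, $k(t,s)\le\Phi(s)$ for all $t,s\in[0,1]$ and $c\Phi(s)\le k(t,s)$ for $t\in[a,b]$, $s\in[0,1]$. Let $T:K\to K$, $Tu(t)=\int_0^1k(t,s)g(s)f(s,u(s))\,ds$, and let $\mathbb T$ be its closed--convex envelope. Suppose that $\{u\}\cap\mathbb{T}u\subset\{Tu\}$ for all $u\in K\cap\mathbb{T}K$, and that there exist $\rho>0$ and $\varepsilon>0$ such that $f_{\rho,\varepsilon}>M(a,b)$, where $$f_{\rho,\varepsilon}:=\inf_{a\le t\le b,\ c(\rho-\varepsilon)\le u\le \frac{\rho}{c}+\varepsilon}\frac{f(t,u)}{\rho},\qquad \frac1{M(a,b)}:=\inf_{t\in[a,b]}\int_a^bk(t,s)g(s)\,ds.$$ Let $V_\rho=\{u\in K:\min_{a\le t\le b}u(t)<\rho\}$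 and $e(t)\equiv1$. Then $u\notin\mathbb{T}u+\lambda e$ for all $u\in\partial V_\rho$ and all $\lambda\ge0$.
   Context: The closed--convex envelope of $T:K\to K$ is $\mathbb{T}u=\bigcap_{\varepsilon>0}\overline{\mathrm{co}}\,T\big(\overline B_\varepsilon(u)\cap K\big)$, with $\overline B_\varepsilon(u)$ the closed ball in $\mathcal C([0,1])$ and $\overline{\mathrm{co}}$ the closed convex hull; $\mathbb TK=\bigcup_{u\in K}\mathbb Tu$ and $\mathbb Tu+\lambda e=\{y+\lambda e:y\in\mathbb Tu\}$. $V_\rho$ is a relatively open subset of $K$ and $\partial V_\rho$ denotes its boundary relative to $K$. *)

theory Defs
  imports "HOL-Analysis.Analysis"
begin

section \<open>The interval [0,1] as a type, so that C([0,1]) is I01 =>C real with the sup norm\<close>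

typedef I01 = "{0..1::real}"
  morphisms Rep_I01 Abs_I01
  by auto

instantiation I01 :: metric_space
begin

definition dist_I01 :: "I01 \<Rightarrow> I01 \<Rightarrow> real"
  where "dist_I01 x y = dist (Rep_I01 x) (Rep_I01 y)"

definition uniformity_I01 :: "(I01 \<times> I01) filter"
  where "uniformity_I01 = (INF e\<in>{0 <..}. principal {(x, y). dist x y < e})"

definition open_I01 :: "I01 set \<Rightarrow> bool"
  where "open_I01 S = (\<forall>x\<in>S. \<forall>\<^sub>F (x', y) in uniformity. x' = x \<longrightarrow> y \<in> S)"

instance
proof
  fix x y z :: I01
  show "dist x y = 0 \<longleftrightarrow> x = y"
    by (simp add: dist_I01_def Rep_I01_inject)
  show "dist x y \<le> dist x z + dist y z"
    unfolding dist_I01_def by (rule dist_triangle2)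
qed (simp_all add: uniformity_I01_def open_I01_def)

end

text \<open>Evaluation of an element of C([0,1]) at a real point s (meaningful for s in [0,1]).\<close>
definition ev :: "(I01 \<Rightarrow>\<^sub>C real) \<Rightarrow> real \<Rightarrow> real"
  where "ev u s = apply_bcontfun u (Abs_I01 s)"

definition coneK :: "real \<Rightarrow> real \<Rightarrow> real \<Rightarrow> (I01 \<Rightarrow>\<^sub>C real) set"
  where "coneK a b c = {u. (\<forall>x. 0 \<le> apply_bcontfun u x) \<and>
                          (INF t\<in>{a..b}. ev u t) \<ge> c * norm u}"

definition hammT :: "(real \<Rightarrow> real \<Rightarrow> real) \<Rightarrow> (real \<Rightarrow> real) \<Rightarrow> (real \<Rightarrow> real \<Rightarrow> real)
    \<Rightarrow> (I01 \<Rightarrow>\<^sub>C real) \<Rightarrow> (I01 \<Rightarrow>\<^sub>C real)"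
  where "hammT k g f u =
     Bcontfun (\<lambda>x. LINT s:{0..1}|lebesgue. k (Rep_I01 x) s * g s * f s (ev u s))"

definition cc_env :: "('a::real_normed_vector \<Rightarrow> 'a) \<Rightarrow> 'a set \<Rightarrow> 'a \<Rightarrow> 'a set"
  where "cc_env T K u = (\<Inter>\<epsilon>\<in>{0<..}. closure (convex hull (T ` (cball u \<epsilon> \<inter> K))))"

end

theory Submission
  imports Defs
begin

text \<open>
  A point \<open>u \<in> \<partial>V\<^sub>\<rho>\<close> has minimum \<open>\<rho>\<close> on \<open>[a,b]\<close>, hence \<open>\<parallel>u\<parallel> \<le> \<rho>/c\<close>, so every \<open>v \<in> K\<close> within
  distance \<open>\<epsilon>\<close> of \<open>u\<close> takes values in \<open>[c(\<rho> - \<epsilon>), \<rho>/c + \<epsilon>]\<close> on \<open>[a,b]\<close>. The growth condition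
  then gives \<open>T v \<ge> \<rho> f\<^sub>\<rho>\<^sub>,\<^sub>\<epsilon> / M(a,b) =: r > \<rho>\<close> on \<open>[a,b]\<close>. The functions that are \<open>\<ge> r\<close> on
  \<open>[a,b]\<close> form a closed convex set, which therefore contains \<open>\<T>u\<close>; as \<open>\<lambda> \<ge> 0\<close>, every element of
  \<open>\<T>u + \<lambda>e\<close> has minimum at least \<open>r > \<rho>\<close> on \<open>[a,b]\<close>, so it is not \<open>u\<close>.
\<close>

lemma set_borel_measurable_mult:
  fixes p q :: "'a \<Rightarrow> real"
  assumes "set_borel_measurable M A p" "set_borel_measurable M A q"
  shows "set_borel_measurable M A (\<lambda>x. p x * q x)"
proof -
  have "(\<lambda>x. indicator A x *\<^sub>R (p x * q x)) =
        (\<lambda>x. (indicator A x *\<^sub>R p x) * (indicator A x *\<^sub>R q x))"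
    by (auto simp: indicator_def fun_eq_iff)
  with assms show ?thesis
    unfolding set_borel_measurable_def by simp measurable
qed

lemma set_integral_mono_set_AE:
  fixes f :: "'a \<Rightarrow> real"
  assumes f: "set_integrable M B f" and A: "A \<in> sets M" "A \<subseteq> B"
    and nonneg: "AE x in M. x \<in> B \<longrightarrow> 0 \<le> f x"
  shows "(LINT x:A|M. f x) \<le> (LINT x:B|M. f x)"
  unfolding set_lebesgue_integral_def
proof (rule integral_mono_AE)
  show "integrable M (\<lambda>x. indicator A x *\<^sub>R f x)"
    using set_integrable_subset[OF f A] unfolding set_integrable_def .
  show "integrable M (\<lambda>x. indicator B x *\<^sub>R f x)"
    using f unfolding set_integrable_def .
  show "AE x in M. indicator A x *\<^sub>R f x \<le> indicator B x *\<^sub>R f x"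
    using nonneg by eventually_elim (use A in \<open>auto simp: indicator_def\<close>)
qed

lemma set_borel_measurable_kernel_slice:
  fixes k :: "real \<Rightarrow> real \<Rightarrow> real"
  assumes k: "continuous_on (T \<times> A) (\<lambda>(t, s). k t s)" and A: "A \<in> sets borel" and t: "t \<in> T"
  shows "set_borel_measurable lebesgue A (k t)"
proof -
  have "continuous_on A (\<lambda>s. (\<lambda>(t, s). k t s) (t, s))"
    by (rule continuous_on_compose2[OF k]) (use t in \<open>auto intro!: continuous_intros\<close>)
  then have "(\<lambda>s. indicator A s *\<^sub>R k t s) \<in> borel_measurable borel"
    by (intro borel_measurable_continuous_on_indicator A) simp
  then show ?thesis
    unfolding set_borel_measurable_def by (intro measurable_completion) simp
qed

lemma set_integrable_kernel_mult:
  fixes k :: "real \<Rightarrow> real \<Rightarrow> real" and q w :: "real \<Rightarrow> real"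
  assumes k: "continuous_on (T \<times> A) (\<lambda>(t, s). k t s)" and A: "A \<in> sets borel"
    and q: "set_borel_measurable lebesgue A q" and w: "set_integrable lebesgue A w"
    and t: "t \<in> T" and bound: "AE s in lebesgue. s \<in> A \<longrightarrow> \<bar>k t s * q s\<bar> \<le> w s"
  shows "set_integrable lebesgue A (\<lambda>s. k t s * q s)"
  by (rule set_integrable_bound[OF w set_borel_measurable_mult
        [OF set_borel_measurable_kernel_slice[OF k A t] q]])
     (use bound in \<open>eventually_elim, auto\<close>)

lemma continuous_on_parametric_set_integral:
  fixes k :: "real \<Rightarrow> real \<Rightarrow> real" and q w :: "real \<Rightarrow> real"
  assumes k: "continuous_on (T \<times> A) (\<lambda>(t, s). k t s)" and A: "A \<in> sets borel"
    and q: "set_borel_measurable lebesgue A q" and w: "set_integrable lebesgue A w"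
    and bound: "\<And>t. t \<in> T \<Longrightarrow> AE s in lebesgue. s \<in> A \<longrightarrow> \<bar>k t s * q s\<bar> \<le> w s"
  shows "continuous_on T (\<lambda>t. LINT s:A|lebesgue. k t s * q s)"
proof (rule continuous_on_sequentiallyI)
  fix X :: "nat \<Rightarrow> real" and t
  assume X: "\<forall>n. X n \<in> T" and t: "t \<in> T" and lim: "X \<longlonglongrightarrow> t"
  have meas: "(\<lambda>s. indicator A s *\<^sub>R (k t' s * q s)) \<in> borel_measurable lebesgue" if "t' \<in> T" for t'
    using set_borel_measurable_mult[OF set_borel_measurable_kernel_slice[OF k A that] q]
    unfolding set_borel_measurable_def .
  have pointwise: "(\<lambda>n. k (X n) s) \<longlonglongrightarrow> k t s" if "s \<in> A" for s
  proof -
    have "(\<lambda>n. (\<lambda>(t, s). k t s) (X n, s)) \<longlonglongrightarrow> (\<lambda>(t, s). k t s) (t, s)"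
      by (rule continuous_on_tendsto_compose[OF k]) (use lim X t that in \<open>auto intro!: tendsto_intros\<close>)
    then show ?thesis
      by simp
  qed
  show "(\<lambda>n. LINT s:A|lebesgue. k (X n) s * q s) \<longlonglongrightarrow> (LINT s:A|lebesgue. k t s * q s)"
    unfolding set_lebesgue_integral_def
  proof (rule integral_dominated_convergence[where w="\<lambda>s. indicator A s *\<^sub>R w s"])
    show "integrable lebesgue (\<lambda>s. indicator A s *\<^sub>R w s)"
      using w unfolding set_integrable_def .
    show "AE s in lebesgue. (\<lambda>n. indicator A s *\<^sub>R (k (X n) s * q s))
            \<longlonglongrightarrow> indicator A s *\<^sub>R (k t s * q s)"
      using pointwise by (auto intro!: tendsto_intros simp: indicator_def)
    show "AE s in lebesgue. norm (indicator A s *\<^sub>R (k (X n) s * q s)) \<le> indicator A s *\<^sub>R w s" for n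
      using bound[OF X[rule_format, of n]] by eventually_elim (auto simp: indicator_def)
  qed (use meas X t in auto)
qed

lemma cc_env_subset:
  assumes "closed C" "convex C" "\<epsilon> > 0" "T ` (cball u \<epsilon> \<inter> K) \<subseteq> C"
  shows "cc_env T K u \<subseteq> C"
proof -
  have "closure (convex hull (T ` (cball u \<epsilon> \<inter> K))) \<subseteq> C"
    using assms by (intro closure_minimal hull_minimal) auto
  with \<open>\<epsilon> > 0\<close> show ?thesis
    unfolding cc_env_def by blast
qed

lemma frontier_of_sublevel_subset:
  fixes \<phi> :: "'a::topological_space \<Rightarrow> real"
  assumes "continuous_on K \<phi>"
  shows "top_of_set K frontier_of {u \<in> K. \<phi> u < \<rho>} \<subseteq> {u \<in> K. \<phi> u = \<rho>}"
proof -
  have "openin (top_of_set K) (K \<inter> \<phi> -` {..<\<rho>})"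
    by (rule continuous_openin_preimage_gen[OF assms]) simp
  moreover have "closedin (top_of_set K) (K \<inter> \<phi> -` {..\<rho>})"
    by (rule continuous_closedin_preimage[OF assms]) simp
  then have "top_of_set K closure_of {u \<in> K. \<phi> u < \<rho>} \<subseteq> K \<inter> \<phi> -` {..\<rho>}"
    by (rule closure_of_minimal[rotated]) auto
  ultimately show ?thesis
    by (auto simp: frontier_of_openin Int_def vimage_def)
qed

lemma continuous_on_Rep_I01: "continuous_on S Rep_I01"
  unfolding continuous_on_iff dist_I01_def by auto

lemma abs_ev_le_norm: "\<bar>ev u t\<bar> \<le> norm u"
  unfolding ev_def using norm_bounded[of u] by simp

lemma abs_ev_diff_le_dist: "\<bar>ev u t - ev v t\<bar> \<le> dist u v"
  unfolding ev_def using dist_bounded[of u _ v] by (simp add: dist_real_def)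

lemma ev_Bcontfun:
  assumes G: "continuous_on {0..1} G" and t: "t \<in> {0..1}"
  shows "ev (Bcontfun (\<lambda>x. G (Rep_I01 x))) t = G t"
proof -
  have "continuous_on UNIV (\<lambda>x. G (Rep_I01 x))"
    by (rule continuous_on_compose2[OF G continuous_on_Rep_I01]) (use Rep_I01 in auto)
  moreover have "bounded (range (\<lambda>x. G (Rep_I01 x)))"
    by (rule bounded_subset[OF compact_imp_bounded[OF compact_continuous_image[OF G]]])
       (use Rep_I01 in auto)
  ultimately have "(\<lambda>x. G (Rep_I01 x)) \<in> bcontfun"
    unfolding bcontfun_def by auto
  with t show ?thesis
    unfolding ev_def by (simp add: Bcontfun_inverse Abs_I01_inverse)
qed

lemma closed_ev_superlevel: "closed {w. \<forall>t\<in>A. r \<le> ev w t}"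
proof -
  have "continuous_on UNIV (\<lambda>w :: I01 \<Rightarrow>\<^sub>C real. ev w t)" for t
    using abs_ev_diff_le_dist unfolding continuous_on_iff dist_real_def by (meson le_less_trans)
  then have "closed {w. r \<le> ev w t}" for t
    by (rule closed_Collect_le[OF continuous_on_const])
  moreover have "{w. \<forall>t\<in>A. r \<le> ev w t} = (\<Inter>t\<in>A. {w. r \<le> ev w t})"
    by auto
  ultimately show ?thesis
    by (simp add: closed_INT)
qed

lemma convex_ev_superlevel: "convex {w. \<forall>t\<in>A. r \<le> ev w t}"
proof (rule convexI)
  fix w1 w2 and p q :: real
  assume "w1 \<in> {w. \<forall>t\<in>A. r \<le> ev w t}" "w2 \<in> {w. \<forall>t\<in>A. r \<le> ev w t}"
    and pq: "0 \<le> p" "0 \<le> q" "p + q = 1"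
  then have "p * r + q * r \<le> p * ev w1 t + q * ev w2 t" if "t \<in> A" for t
    using that by (intro add_mono mult_left_mono) auto
  with pq show "p *\<^sub>R w1 + q *\<^sub>R w2 \<in> {w. \<forall>t\<in>A. r \<le> ev w t}"
    by (simp add: ev_def flip: distrib_right)
qed

definition interval_min :: "real \<Rightarrow> real \<Rightarrow> (I01 \<Rightarrow>\<^sub>C real) \<Rightarrow> real"
  where "interval_min a b u = (INF t\<in>{a..b}. ev u t)"

lemma interval_min_le_ev: "t \<in> {a..b} \<Longrightarrow> interval_min a b u \<le> ev u t"
proof -
  have "- norm u \<le> ev u s" for s
    using abs_ev_le_norm[of u s] by linarith
  then show "t \<in> {a..b} \<Longrightarrow> interval_min a b u \<le> ev u t"
    unfolding interval_min_def by (intro cINF_lower bdd_belowI2)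
qed

lemma interval_min_greatest:
  "a \<le> b \<Longrightarrow> (\<And>t. t \<in> {a..b} \<Longrightarrow> r \<le> ev u t) \<Longrightarrow> r \<le> interval_min a b u"
  unfolding interval_min_def by (rule cINF_greatest) auto

lemma interval_min_lipschitz:
  assumes "a \<le> b"
  shows "interval_min a b u - dist u v \<le> interval_min a b v"
  using interval_min_le_ev[of _ a b u] abs_ev_diff_le_dist[of u _ v]
  by (intro interval_min_greatest[OF assms]) (smt (verit))

lemma continuous_on_interval_min:
  assumes "a \<le> b"
  shows "continuous_on S (interval_min a b)"
proof (rule lipschitz_on_continuous_on[OF lipschitz_onI])
  show "dist (interval_min a b u) (interval_min a b v) \<le> 1 * dist u v" for u v
    using interval_min_lipschitz[OF assms, of u v] interval_min_lipschitz[OF assms, of v u]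
    by (auto simp: dist_real_def dist_commute abs_le_iff)
qed simp

lemma coneK_ev_nonneg: "u \<in> coneK a b c \<Longrightarrow> 0 \<le> ev u s"
  unfolding coneK_def ev_def by auto

lemma coneK_norm_le: "u \<in> coneK a b c \<Longrightarrow> c * norm u \<le> interval_min a b u"
  unfolding coneK_def interval_min_def by auto

lemma coneK_ev_near_level:
  assumes c: "0 < c" "c \<le> 1" and u: "u \<in> coneK a b c" "interval_min a b u = \<rho>"
    and v: "v \<in> coneK a b c" "dist u v \<le> \<epsilon>" and s: "s \<in> {a..b}"
  shows "c * (\<rho> - \<epsilon>) \<le> ev v s" and "ev v s \<le> \<rho> / c + \<epsilon>"
proof -
  have "\<rho> - \<epsilon> \<le> ev v s"
    using interval_min_le_ev[OF s, of u] abs_ev_diff_le_dist[of u s v] u v by linarith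
  moreover have "c * (\<rho> - \<epsilon>) \<le> max 0 (\<rho> - \<epsilon>)"
    using c by (cases "0 \<le> \<rho> - \<epsilon>") (simp_all add: mult_left_le_one_le mult_nonneg_nonpos)
  ultimately show "c * (\<rho> - \<epsilon>) \<le> ev v s"
    using coneK_ev_nonneg[OF v(1), of s] by (meson max.boundedI order_trans)
  have "norm u \<le> \<rho> / c"
    using coneK_norm_le[OF u(1)] u(2) c by (simp add: le_divide_eq mult.commute)
  moreover have "norm v \<le> norm u + dist u v"
    using norm_triangle_ineq2[of v u] by (simp add: dist_norm norm_minus_commute)
  ultimately show "ev v s \<le> \<rho> / c + \<epsilon>"
    using abs_ev_le_norm[of v s] v by linarith
qed

locale hammerstein_setting =
  fixes a b c :: real
    and f :: "real \<Rightarrow> real \<Rightarrow> real"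
    and g \<Phi> :: "real \<Rightarrow> real"
    and k :: "real \<Rightarrow> real \<Rightarrow> real"
  assumes ab: "0 \<le> a" "a \<le> b" "b \<le> 1"
    and c: "0 < c" "c \<le> 1"
    and f_nonneg: "\<And>t u. t \<in> {0..1} \<Longrightarrow> 0 \<le> u \<Longrightarrow> 0 \<le> f t u"
    and f_meas: "\<And>u :: I01 \<Rightarrow>\<^sub>C real. (\<forall>x. 0 \<le> apply_bcontfun u x) \<Longrightarrow>
                    set_borel_measurable lebesgue {0..1} (\<lambda>s. f s (ev u s))"
    and f_bdd: "\<And>r. r > 0 \<Longrightarrow> \<exists>R>0. AE t in lebesgue. t \<in> {0..1} \<longrightarrow> (\<forall>u\<in>{0..r}. f t u \<le> R)"
    and g_meas: "set_borel_measurable lebesgue {0..1} g"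
    and g_nonneg: "AE s in lebesgue. s \<in> {0..1} \<longrightarrow> 0 \<le> g s"
    and k_cont: "continuous_on ({0..1} \<times> {0..1}) (\<lambda>(t, s). k t s)"
    and k_nonneg: "\<And>t s. t \<in> {0..1} \<Longrightarrow> s \<in> {0..1} \<Longrightarrow> 0 \<le> k t s"
    and Phi_g_int: "set_integrable lebesgue {0..1} (\<lambda>s. \<Phi> s * g s)"
    and Phi_g_pos: "(LINT s:{a..b}|lebesgue. \<Phi> s * g s) > 0"
    and k_le_Phi: "\<And>t s. t \<in> {0..1} \<Longrightarrow> s \<in> {0..1} \<Longrightarrow> k t s \<le> \<Phi> s"
    and Phi_le_k: "\<And>t s. t \<in> {a..b} \<Longrightarrow> s \<in> {0..1} \<Longrightarrow> c * \<Phi> s \<le> k t s"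
begin

definition kernel_mass :: real
  where "kernel_mass = (INF t\<in>{a..b}. LINT s:{a..b}|lebesgue. k t s * g s)"

lemma ab_subset: "{a..b} \<subseteq> {0..1}"
  using ab by auto

lemma kg_integrable:
  assumes t: "t \<in> {0..1}"
  shows "set_integrable lebesgue {0..1} (\<lambda>s. k t s * g s)"
proof (rule set_integrable_kernel_mult[OF k_cont _ g_meas Phi_g_int t])
  show "AE s in lebesgue. s \<in> {0..1} \<longrightarrow> \<bar>k t s * g s\<bar> \<le> \<Phi> s * g s"
    using g_nonneg by eventually_elim (use k_nonneg k_le_Phi t in \<open>auto intro: mult_right_mono\<close>)
qed simp

lemma kg_integral_lower:
  assumes t: "t \<in> {a..b}"
  shows "c * (LINT s:{a..b}|lebesgue. \<Phi> s * g s) \<le> (LINT s:{a..b}|lebesgue. k t s * g s)"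
proof -
  have "c * (LINT s:{a..b}|lebesgue. \<Phi> s * g s) = (LINT s:{a..b}|lebesgue. c * (\<Phi> s * g s))"
    by simp
  also have "\<dots> \<le> (LINT s:{a..b}|lebesgue. k t s * g s)"
  proof (rule set_integral_mono_AE)
    show "set_integrable lebesgue {a..b} (\<lambda>s. c * (\<Phi> s * g s))"
      using set_integrable_subset[OF Phi_g_int _ ab_subset] by (simp add: set_integrable_mult_right)
    show "set_integrable lebesgue {a..b} (\<lambda>s. k t s * g s)"
      using set_integrable_subset[OF kg_integrable _ ab_subset] t ab_subset by auto
    show "AE s\<in>{a..b} in lebesgue. c * (\<Phi> s * g s) \<le> k t s * g s"
      using g_nonneg by eventually_elim
        (use Phi_le_k[OF t] ab_subset in \<open>auto simp flip: mult.assoc intro: mult_right_mono\<close>)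
  qed
  finally show ?thesis .
qed

lemma kernel_mass_le: "t \<in> {a..b} \<Longrightarrow> kernel_mass \<le> (LINT s:{a..b}|lebesgue. k t s * g s)"
  unfolding kernel_mass_def by (rule cINF_lower[OF bdd_belowI2]) (rule kg_integral_lower)

lemma kernel_mass_pos: "0 < kernel_mass"
proof -
  have "c * (LINT s:{a..b}|lebesgue. \<Phi> s * g s) \<le> kernel_mass"
    unfolding kernel_mass_def using ab by (intro cINF_greatest kg_integral_lower) auto
  moreover have "0 < c * (LINT s:{a..b}|lebesgue. \<Phi> s * g s)"
    using c Phi_g_pos by simp
  ultimately show ?thesis
    by linarith
qed

lemma hammT_integrand_bound:
  assumes v: "\<forall>x. 0 \<le> apply_bcontfun v x"
  obtains R where
    "\<And>t. t \<in> {0..1} \<Longrightarrow>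
       AE s in lebesgue. s \<in> {0..1} \<longrightarrow> \<bar>k t s * (g s * f s (ev v s))\<bar> \<le> R * (\<Phi> s * g s)"
proof -
  have ev_range: "ev v s \<in> {0..norm v + 1}" for s
    using v abs_ev_le_norm[of v s] by (auto simp: ev_def)
  obtain R where R: "AE s in lebesgue. s \<in> {0..1} \<longrightarrow> (\<forall>x\<in>{0..norm v + 1}. f s x \<le> R)"
    using f_bdd[of "norm v + 1"] by (smt (verit) norm_ge_zero)
  have "AE s in lebesgue. s \<in> {0..1} \<longrightarrow> \<bar>k t s * (g s * f s (ev v s))\<bar> \<le> R * (\<Phi> s * g s)"
    if t: "t \<in> {0..1}" for t
    using g_nonneg R
  proof eventually_elim
    case (elim s)
    show ?case
    proof
      assume s: "s \<in> {0..1}"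
      have "0 \<le> k t s" "0 \<le> g s" "0 \<le> f s (ev v s)"
        using k_nonneg[OF t s] elim s f_nonneg[OF s] ev_range[of s] by auto
      moreover have "k t s \<le> \<Phi> s" "f s (ev v s) \<le> R"
        using k_le_Phi[OF t s] elim s ev_range[of s] by auto
      ultimately have "k t s * (g s * f s (ev v s)) \<le> \<Phi> s * (g s * R)"
        by (intro mult_mono) (auto intro: mult_left_mono order_trans)
      then show "\<bar>k t s * (g s * f s (ev v s))\<bar> \<le> R * (\<Phi> s * g s)"
        using \<open>0 \<le> k t s\<close> \<open>0 \<le> g s\<close> \<open>0 \<le> f s (ev v s)\<close> by (simp add: mult_ac)
    qed
  qed
  then show ?thesis
    using that by blast
qed

lemma
  assumes v: "\<forall>x. 0 \<le> apply_bcontfun v x" and t: "t \<in> {0..1}"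
  shows hammT_integrable: "set_integrable lebesgue {0..1} (\<lambda>s. k t s * g s * f s (ev v s))"
    and ev_hammT: "ev (hammT k g f v) t = (LINT s:{0..1}|lebesgue. k t s * g s * f s (ev v s))"
proof -
  obtain R where R: "\<And>t. t \<in> {0..1} \<Longrightarrow>
      AE s in lebesgue. s \<in> {0..1} \<longrightarrow> \<bar>k t s * (g s * f s (ev v s))\<bar> \<le> R * (\<Phi> s * g s)"
    using hammT_integrand_bound[OF v] by blast
  have q: "set_borel_measurable lebesgue {0..1} (\<lambda>s. g s * f s (ev v s))"
    by (rule set_borel_measurable_mult[OF g_meas f_meas[OF v]])
  have w: "set_integrable lebesgue {0..1} (\<lambda>s. R * (\<Phi> s * g s))"
    using Phi_g_int by (rule set_integrable_mult_right)
  show "set_integrable lebesgue {0..1} (\<lambda>s. k t s * g s * f s (ev v s))"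
    using set_integrable_kernel_mult[OF k_cont _ q w t R[OF t]] by (simp add: mult.assoc)
  have "continuous_on {0..1} (\<lambda>t. LINT s:{0..1}|lebesgue. k t s * g s * f s (ev v s))"
    using continuous_on_parametric_set_integral[OF k_cont _ q w R] by (simp add: mult.assoc)
  then show "ev (hammT k g f v) t = (LINT s:{0..1}|lebesgue. k t s * g s * f s (ev v s))"
    unfolding hammT_def by (rule ev_Bcontfun[OF _ t])
qed

lemma ev_hammT_lower:
  assumes v: "\<forall>x. 0 \<le> apply_bcontfun v x" and m: "0 \<le> m"
    and f_ge: "\<And>s. s \<in> {a..b} \<Longrightarrow> m \<le> f s (ev v s)" and t: "t \<in> {a..b}"
  shows "m * kernel_mass \<le> ev (hammT k g f v) t"
proof -
  have t01: "t \<in> {0..1}"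
    using t ab_subset by auto
  have int01: "set_integrable lebesgue {0..1} (\<lambda>s. k t s * g s * f s (ev v s))"
    by (rule hammT_integrable[OF v t01])
  have ev_nonneg: "0 \<le> ev v s" for s
    using v by (simp add: ev_def)
  have "m * kernel_mass \<le> m * (LINT s:{a..b}|lebesgue. k t s * g s)"
    using kernel_mass_le[OF t] m by (rule mult_left_mono)
  also have "\<dots> = (LINT s:{a..b}|lebesgue. (k t s * g s) * m)"
    by (simp add: mult.commute)
  also have "\<dots> \<le> (LINT s:{a..b}|lebesgue. k t s * g s * f s (ev v s))"
  proof (rule set_integral_mono_AE)
    show "set_integrable lebesgue {a..b} (\<lambda>s. (k t s * g s) * m)"
      using set_integrable_subset[OF kg_integrable[OF t01] _ ab_subset]
      by (simp add: set_integrable_mult_left)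
    show "set_integrable lebesgue {a..b} (\<lambda>s. k t s * g s * f s (ev v s))"
      using set_integrable_subset[OF int01 _ ab_subset] by simp
    show "AE s\<in>{a..b} in lebesgue. (k t s * g s) * m \<le> k t s * g s * f s (ev v s)"
      using g_nonneg
    proof eventually_elim
      case (elim s)
      show ?case
      proof
        assume s: "s \<in> {a..b}"
        then have "0 \<le> k t s * g s"
          using elim k_nonneg[OF t01] ab_subset by auto
        then show "(k t s * g s) * m \<le> k t s * g s * f s (ev v s)"
          by (rule mult_left_mono[OF f_ge[OF s]])
      qed
    qed
  qed
  also have "\<dots> \<le> (LINT s:{0..1}|lebesgue. k t s * g s * f s (ev v s))"
  proof (rule set_integral_mono_set_AE[OF int01 _ ab_subset])
    show "AE s in lebesgue. s \<in> {0..1} \<longrightarrow> 0 \<le> k t s * g s * f s (ev v s)"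
      using g_nonneg by eventually_elim (simp add: k_nonneg[OF t01] f_nonneg ev_nonneg)
  qed simp
  also have "\<dots> = ev (hammT k g f v) t"
    by (rule ev_hammT[OF v t01, symmetric])
  finally show ?thesis .
qed

end

theorem lemma3:
  fixes a b c \<rho> \<epsilon> :: real
    and f :: "real \<Rightarrow> real \<Rightarrow> real"
    and g \<Phi> :: "real \<Rightarrow> real"
    and k :: "real \<Rightarrow> real \<Rightarrow> real"
  assumes ab: "0 \<le> a" "a \<le> b" "b \<le> 1"
    and c: "0 < c" "c \<le> 1"
    (* (H1) *)
    and f_nonneg: "\<And>t u. t \<in> {0..1} \<Longrightarrow> 0 \<le> u \<Longrightarrow> 0 \<le> f t u"
    and f_meas: "\<And>u :: I01 \<Rightarrow>\<^sub>C real. (\<forall>x. 0 \<le> apply_bcontfun u x) \<Longrightarrow>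
                    set_borel_measurable lebesgue {0..1} (\<lambda>s. f s (ev u s))"
    and f_bdd: "\<And>r. r > 0 \<Longrightarrow> \<exists>R>0. AE t in lebesgue. t \<in> {0..1} \<longrightarrow> (\<forall>u\<in>{0..r}. f t u \<le> R)"
    (* (H2) *)
    and g_meas: "set_borel_measurable lebesgue {0..1} g"
    and g_nonneg: "AE s in lebesgue. s \<in> {0..1} \<longrightarrow> 0 \<le> g s"
    (* (H3) *)
    and k_cont: "continuous_on ({0..1} \<times> {0..1}) (\<lambda>(t, s). k t s)"
    and k_nonneg: "\<And>t s. t \<in> {0..1} \<Longrightarrow> s \<in> {0..1} \<Longrightarrow> 0 \<le> k t s"
    (* (H4) *)
    and Phi_meas: "set_borel_measurable lebesgue {0..1} \<Phi>"
    and Phi_nonneg: "\<And>s. s \<in> {0..1} \<Longrightarrow> 0 \<le> \<Phi> s"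
    and Phi_g_int: "set_integrable lebesgue {0..1} (\<lambda>s. \<Phi> s * g s)"
    and Phi_g_pos: "(LINT s:{a..b}|lebesgue. \<Phi> s * g s) > 0"
    and k_le_Phi: "\<And>t s. t \<in> {0..1} \<Longrightarrow> s \<in> {0..1} \<Longrightarrow> k t s \<le> \<Phi> s"
    and Phi_le_k: "\<And>t s. t \<in> {a..b} \<Longrightarrow> s \<in> {0..1} \<Longrightarrow> c * \<Phi> s \<le> k t s"
    (* fixed point condition on the envelope *)
    and env_cond: "\<And>u. u \<in> coneK a b c \<inter>
                       (\<Union>v\<in>coneK a b c. cc_env (hammT k g f) (coneK a b c) v) \<Longrightarrow>
                     {u} \<inter> cc_env (hammT k g f) (coneK a b c) u \<subseteq> {hammT k g f u}"
    and rho: "\<rho> > 0" and eps: "\<epsilon> > 0"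
    and growth: "Inf {f t u / \<rho> | t u. t \<in> {a..b} \<and> c * (\<rho> - \<epsilon>) \<le> u \<and> u \<le> \<rho> / c + \<epsilon> \<and> 0 \<le> u}
                 > 1 / (INF t\<in>{a..b}. LINT s:{a..b}|lebesgue. k t s * g s)"
  shows "\<forall>u \<in> (top_of_set (coneK a b c)) frontier_of {u \<in> coneK a b c. (INF t\<in>{a..b}. ev u t) < \<rho>}.
           \<forall>lam\<ge>0. u \<notin> {y + lam *\<^sub>R const_bcontfun 1 | y. y \<in> cc_env (hammT k g f) (coneK a b c) u}"
proof -
  interpret hammerstein_setting a b c f g \<Phi> k
    using assms by unfold_locales auto
  define K where "K = coneK a b c"
  define T where "T = hammT k g f"
  define F where "F = Inf {f t u / \<rho> | t u. t \<in> {a..b} \<and> c * (\<rho> - \<epsilon>) \<le> u \<and> u \<le> \<rho> / c + \<epsilon> \<and> 0 \<le> u}"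
  have F_le: "F \<le> f t x / \<rho>"
    if "t \<in> {a..b}" "c * (\<rho> - \<epsilon>) \<le> x" "x \<le> \<rho> / c + \<epsilon>" "0 \<le> x" for t x
    unfolding F_def
    by (rule cInf_lower) (use that ab_subset f_nonneg rho in \<open>auto intro!: bdd_belowI[where m=0]\<close>)
  have F_mass: "1 < F * kernel_mass"
    using growth kernel_mass_pos unfolding F_def kernel_mass_def by (simp add: divide_less_eq)
  define r where "r = \<rho> * F * kernel_mass"
  have rho_less: "\<rho> < r"
    using F_mass rho unfolding r_def by (simp add: mult.assoc)
  have T_ball: "T ` (cball u \<epsilon> \<inter> K) \<subseteq> {w. \<forall>t\<in>{a..b}. r \<le> ev w t}"
    if u: "u \<in> K" "interval_min a b u = \<rho>" for u
  proof
    fix w assume "w \<in> T ` (cball u \<epsilon> \<inter> K)"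
    then obtain v where v: "v \<in> K" "dist u v \<le> \<epsilon>" and w: "w = T v"
      by auto
    have v_nonneg: "\<forall>x. 0 \<le> apply_bcontfun v x"
      using v(1) unfolding K_def coneK_def by blast
    have f_ge: "\<rho> * F \<le> f s (ev v s)" if s: "s \<in> {a..b}" for s
      using F_le[OF s coneK_ev_near_level[OF c u[unfolded K_def] v[unfolded K_def] s]]
        coneK_ev_nonneg[OF v(1)[unfolded K_def]] rho
      by (simp add: le_divide_eq mult.commute)
    have "0 \<le> \<rho> * F"
      using F_mass kernel_mass_pos rho by (smt (verit) mult_nonpos_nonneg mult_nonneg_nonneg)
    then have "r \<le> ev (T v) t" if "t \<in> {a..b}" for t
      unfolding r_def T_def by (rule ev_hammT_lower[OF v_nonneg _ f_ge that])
    then show "w \<in> {w. \<forall>t\<in>{a..b}. r \<le> ev w t}"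
      using w by blast
  qed
  show ?thesis
  proof (intro ballI allI impI notI)
    fix u lam
    assume uF: "u \<in> top_of_set (coneK a b c) frontier_of {u \<in> coneK a b c. (INF t\<in>{a..b}. ev u t) < \<rho>}"
      and lam: "0 \<le> lam"
      and "u \<in> {y + lam *\<^sub>R const_bcontfun 1 | y. y \<in> cc_env (hammT k g f) (coneK a b c) u}"
    then obtain y where y: "y \<in> cc_env T K u" and uy: "u = y + lam *\<^sub>R const_bcontfun 1"
      unfolding T_def K_def by blast
    have "u \<in> top_of_set K frontier_of {u \<in> K. interval_min a b u < \<rho>}"
      using uF by (simp add: K_def interval_min_def)
    then have u: "u \<in> K" "interval_min a b u = \<rho>"
      using frontier_of_sublevel_subset[OF continuous_on_interval_min[OF ab(2)]] by blast+
    have "r \<le> ev y t" if "t \<in> {a..b}" for t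
      using cc_env_subset[OF closed_ev_superlevel convex_ev_superlevel eps T_ball[OF u]] y that
      by blast
    then have "r \<le> interval_min a b u"
      using lam by (intro interval_min_greatest[OF ab(2)]) (simp add: uy ev_def add_increasing2)
    with u(2) rho_less show False
      by simp
  qed
qed

end
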